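(* Fix any integer $d\geq 3$, any prime power $q$, any group $\Gamma$, and a set $S\subseteq[d-1]$ with $|S|\geq 2$. Let $s$ be any face of $\mathcal{B}^{d,S}_q$ of co-dimension at least $3$. Then the $1$-cohomology of the link $\mathcal{B}^{d,S}_{q,s}$ with respect to $\Gamma$ is trivial; that is, every $f\in C^1(\mathcal{B}^{d,S}_{q,s},\Gamma)$ with $\delta f\equiv\mathrm{id}$ is of the form $f=\delta g$ for some $g:\mathcal{B}^{d,S}_{q,s}(0)\to\Gamma$.
   Context: For $S=\{s_1<\dots<s_m\}\subseteq[d-1]$, $\mathcal{B}^{d,S}_q$ is the simplicial complex whose vertices are the subspaces of $\mathbb{F}_q^d$ with dimension in $S$ and whose top faces are the chains $W_1\subset\cdots\subset W_m$ with $\dim W_i=s_i$ (faces are subsets of top faces). The co-dimension of a face $s$ is $|S|-|s|$, and $\mathcal{B}^{d,S}_{q,s}=\{t\setminus s: t\supseteq s\}$ is its link. $C^1(X,\Gamma)$ is the set of functions $f$ on ordered edges $(u,v)$ of $X$ with $f(u,v)=f(v,u)^{-1}$; $\delta f(u,v,w)=f(u,v)f(v,w)f(w,u)$ on triangles; $\delta g(u,v)=g(u)g(v)^{-1}$ for $g$ on vertices. *)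

theory Defs
  imports "HOL-Analysis.Analysis"
begin

text \<open>The field F_q is modelled by a finite field type 'k (CARD('k) = q, necessarily a prime
power, and every prime power arises this way); F_q^d is 'k^'n with CARD('n) = d.\<close>

definition top_face :: "nat set \<Rightarrow> ('k::field ^ 'n) set set \<Rightarrow> bool" where
  "top_face S F \<longleftrightarrow>
     (\<forall>W\<in>F. vec.subspace W) \<and> bij_betw vec.dim F S \<and>
     (\<forall>W1\<in>F. \<forall>W2\<in>F. W1 \<subseteq> W2 \<or> W2 \<subseteq> W1)"

definition face :: "nat set \<Rightarrow> ('k::field ^ 'n) set set \<Rightarrow> bool" where
  "face S t \<longleftrightarrow> (\<exists>F. top_face S F \<and> t \<subseteq> F)"

definition link :: "nat set \<Rightarrow> ('k::field ^ 'n) set set \<Rightarrow> ('k ^ 'n) set set set" where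
  "link S s = {t - s | t. face S t \<and> s \<subseteq> t}"

definition link_vertices :: "nat set \<Rightarrow> ('k::field ^ 'n) set set \<Rightarrow> ('k ^ 'n) set set" where
  "link_vertices S s = {v. {v} \<in> link S s}"

definition link_edge :: "nat set \<Rightarrow> ('k::field ^ 'n) set set \<Rightarrow> ('k ^ 'n) set \<Rightarrow> ('k ^ 'n) set \<Rightarrow> bool" where
  "link_edge S s u v \<longleftrightarrow> u \<noteq> v \<and> {u, v} \<in> link S s"

definition link_triangle :: "nat set \<Rightarrow> ('k::field ^ 'n) set set \<Rightarrow> ('k ^ 'n) set \<Rightarrow> ('k ^ 'n) set \<Rightarrow> ('k ^ 'n) set \<Rightarrow> bool" where
  "link_triangle S s u v w \<longleftrightarrow> u \<noteq> v \<and> v \<noteq> w \<and> u \<noteq> w \<and> {u, v, w} \<in> link S s"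

text \<open>1-cochains with values in a (not necessarily abelian) group, written additively
(class group_add): f(u,v) = f(v,u)^{-1}.\<close>
definition cochain1 :: "nat set \<Rightarrow> ('k::field ^ 'n) set set \<Rightarrow> (('k ^ 'n) set \<Rightarrow> ('k ^ 'n) set \<Rightarrow> 'g::group_add) \<Rightarrow> bool" where
  "cochain1 S s f \<longleftrightarrow> (\<forall>u v. link_edge S s u v \<longrightarrow> f u v = - f v u)"

definition cocycle1 :: "nat set \<Rightarrow> ('k::field ^ 'n) set set \<Rightarrow> (('k ^ 'n) set \<Rightarrow> ('k ^ 'n) set \<Rightarrow> 'g::group_add) \<Rightarrow> bool" where
  "cocycle1 S s f \<longleftrightarrow> (\<forall>u v w. link_triangle S s u v w \<longrightarrow> f u v + f v w + f w u = 0)"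

definition coboundary1 :: "nat set \<Rightarrow> ('k::field ^ 'n) set set \<Rightarrow> (('k ^ 'n) set \<Rightarrow> ('k ^ 'n) set \<Rightarrow> 'g::group_add) \<Rightarrow> bool" where
  "coboundary1 S s f \<longleftrightarrow> (\<exists>g. \<forall>u v. link_edge S s u v \<longrightarrow> f u v = g u + - g v)"

end

theory Submission
  imports Defs
begin

text \<open>The link of \<open>s\<close> is the flag complex of the incidence graph on the subspaces \<open>W\<close> with
\<open>dim W \<in> E = S - dim ` s\<close> that are comparable with every member of \<open>s\<close>, and \<open>card E \<ge> 3\<close>.

If a member \<open>A\<close> of \<open>s\<close> has dimension strictly between two elements of \<open>E\<close>, this complex is the
join of its parts below and above \<open>A\<close>, one of which involves two dimensions and is therefore
connected; on such a join every 1-cocycle is a coboundary. Otherwise it is the complex of all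
subspaces between two fixed subspaces \<open>A \<subseteq> B\<close> with dimension in \<open>E\<close>, and we induct on \<open>dim B\<close>:
for a hyperplane \<open>H \<supseteq> A\<close> of \<open>B\<close>, add the subspaces not contained in \<open>H\<close> by decreasing dimension.
Those added in one step are pairwise non-incident, and the neighbourhood of each of them, \<open>W\<close> say,
among the earlier ones is the join of the subspaces of \<open>W \<inter> H\<close> and the subspaces above \<open>W\<close>, hence
connected, so the coboundary extends.\<close>

locale flag_complex =
  fixes adj :: "'a \<Rightarrow> 'a \<Rightarrow> bool"
  assumes adj_sym: "adj u v \<Longrightarrow> adj v u"
    and adj_irrefl: "\<not> adj u u"
begin

definition alternating_on :: "'a set \<Rightarrow> ('a \<Rightarrow> 'a \<Rightarrow> 'g::group_add) \<Rightarrow> bool" where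
  "alternating_on X f \<longleftrightarrow> (\<forall>u\<in>X. \<forall>v\<in>X. adj u v \<longrightarrow> f u v = - f v u)"

definition cocycle_on :: "'a set \<Rightarrow> ('a \<Rightarrow> 'a \<Rightarrow> 'g::group_add) \<Rightarrow> bool" where
  "cocycle_on X f \<longleftrightarrow>
     (\<forall>u\<in>X. \<forall>v\<in>X. \<forall>w\<in>X. adj u v \<longrightarrow> adj v w \<longrightarrow> adj u w \<longrightarrow> f u v + f v w + f w u = 0)"

definition coboundary_on :: "'a set \<Rightarrow> ('a \<Rightarrow> 'a \<Rightarrow> 'g::group_add) \<Rightarrow> bool" where
  "coboundary_on X f \<longleftrightarrow> (\<exists>g. \<forall>u\<in>X. \<forall>v\<in>X. adj u v \<longrightarrow> f u v = g u - g v)"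

definition edge_in :: "'a set \<Rightarrow> 'a \<Rightarrow> 'a \<Rightarrow> bool" where
  "edge_in X u v \<longleftrightarrow> u \<in> X \<and> v \<in> X \<and> adj u v"

definition connected_on :: "'a set \<Rightarrow> bool" where
  "connected_on X \<longleftrightarrow> (\<forall>u\<in>X. \<forall>v\<in>X. (edge_in X)\<^sup>*\<^sup>* u v)"

lemma alternating_on_subset: "alternating_on X f \<Longrightarrow> Y \<subseteq> X \<Longrightarrow> alternating_on Y f"
  unfolding alternating_on_def by blast

lemma cocycle_on_subset: "cocycle_on X f \<Longrightarrow> Y \<subseteq> X \<Longrightarrow> cocycle_on Y f"
  unfolding cocycle_on_def by blast

lemma alternating_onD:
  "alternating_on X f \<Longrightarrow> u \<in> X \<Longrightarrow> v \<in> X \<Longrightarrow> adj u v \<Longrightarrow> f u v = - f v u"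
  unfolding alternating_on_def by blast

lemma cocycle_on_triangle:
  assumes alt: "alternating_on X f" and cyc: "cocycle_on X f"
    and X: "u \<in> X" "v \<in> X" "w \<in> X" and adj: "adj u v" "adj u w" "adj w v"
  shows "f u v = f u w + f w v"
proof -
  have "f u v + (f v w + f w u) = 0"
    using cyc X adj adj_sym unfolding cocycle_on_def by (simp add: add.assoc)
  then have "f u v = - (f v w + f w u)"
    by (simp only: eq_neg_iff_add_eq_0)
  also have "\<dots> = - f w u + - f v w"
    by (rule minus_add)
  also have "\<dots> = f u w + f w v"
    using alternating_onD[OF alt] X adj adj_sym by metis
  finally show ?thesis .
qed

lemma connected_onD: "connected_on X \<Longrightarrow> u \<in> X \<Longrightarrow> v \<in> X \<Longrightarrow> (edge_in X)\<^sup>*\<^sup>* u v"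
  unfolding connected_on_def by blast

lemma connected_on_const:
  assumes "connected_on X" "u \<in> X" "v \<in> X"
    and "\<And>x y. x \<in> X \<Longrightarrow> y \<in> X \<Longrightarrow> adj x y \<Longrightarrow> \<phi> x = \<phi> y"
  shows "\<phi> u = \<phi> v"
  using connected_onD[OF assms(1-3)]
  by (induction rule: rtranclp_induct) (auto simp: edge_in_def assms(4))

lemma connected_on_hub:
  assumes hub: "\<And>a b. a \<in> Z \<Longrightarrow> b \<in> Z \<Longrightarrow> (edge_in X)\<^sup>*\<^sup>* a b"
    and near: "\<And>x. x \<in> X \<Longrightarrow> \<exists>z\<in>Z. z \<in> X \<and> (x = z \<or> adj x z)"
  shows "connected_on X"
  unfolding connected_on_def
proof (intro ballI)
  have to_hub: "\<exists>z\<in>Z. (edge_in X)\<^sup>*\<^sup>* x z \<and> (edge_in X)\<^sup>*\<^sup>* z x" if x: "x \<in> X" for x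
  proof -
    obtain z where z: "z \<in> Z" "z \<in> X" "x = z \<or> adj x z"
      using near[OF x] by blast
    then have "x = z \<or> edge_in X x z \<and> edge_in X z x"
      using x adj_sym by (auto simp: edge_in_def)
    then show ?thesis
      using z(1) by auto
  qed
  fix u v assume "u \<in> X" "v \<in> X"
  then obtain a b where "a \<in> Z" "b \<in> Z" "(edge_in X)\<^sup>*\<^sup>* u a" "(edge_in X)\<^sup>*\<^sup>* b v"
    using to_hub by blast
  then show "(edge_in X)\<^sup>*\<^sup>* u v"
    using hub rtranclp_trans by metis
qed

lemma connected_on_join:
  assumes "x \<in> X" "y \<in> Y" "\<And>x y. x \<in> X \<Longrightarrow> y \<in> Y \<Longrightarrow> adj x y"
  shows "connected_on (X \<union> Y)"
proof (rule connected_on_hub[of "{x, y}"])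
  have "adj x y" "adj y x"
    using assms adj_sym by blast+
  then have "edge_in (X \<union> Y) x y" "edge_in (X \<union> Y) y x"
    using assms(1,2) by (auto simp: edge_in_def)
  then show "(edge_in (X \<union> Y))\<^sup>*\<^sup>* a b" if "a \<in> {x, y}" "b \<in> {x, y}" for a b
    using that by auto
  show "\<exists>z\<in>{x, y}. z \<in> X \<union> Y \<and> (u = z \<or> adj u z)" if "u \<in> X \<union> Y" for u
  proof (cases "u \<in> X")
    case True
    then show ?thesis using assms by blast
  next
    case False
    then show ?thesis using that assms(1) assms(3)[of x u] adj_sym by blast
  qed
qed

lemma coboundary_on_cone:
  assumes alt: "alternating_on X f" and cyc: "cocycle_on X f"
    and c: "c \<in> X" "\<And>x. x \<in> X \<Longrightarrow> x \<noteq> c \<Longrightarrow> adj x c"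
  shows "coboundary_on X f"
proof -
  define g where "g x = (if x = c then 0 else f x c)" for x
  have "f u v = g u - g v" if uv: "u \<in> X" "v \<in> X" "adj u v" for u v
  proof -
    have "u \<noteq> v" using uv adj_irrefl by blast
    consider "u = c" | "v = c" | "u \<noteq> c" "v \<noteq> c" by blast
    then show ?thesis
    proof cases
      case 1
      then have "f u v = - f v u"
        using alternating_onD[OF alt] uv by blast
      then show ?thesis using 1 \<open>u \<noteq> v\<close> by (simp add: g_def)
    next
      case 2
      then show ?thesis using \<open>u \<noteq> v\<close> by (simp add: g_def)
    next
      case 3
      then have "adj u c" "adj c v" "adj v c"
        using uv c adj_sym by blast+
      then have "f u v = f u c + f c v" "f c v = - f v c"
        using cocycle_on_triangle[OF alt cyc] alternating_onD[OF alt] uv c by blast+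
      then show ?thesis using 3 by (simp add: g_def)
    qed
  qed
  then show ?thesis unfolding coboundary_on_def by blast
qed

lemma cocycle_on_join_across:
  assumes alt: "alternating_on (X \<union> Y) f" and cyc: "cocycle_on (X \<union> Y) f"
    and conn: "connected_on Y" and XY: "\<And>x y. x \<in> X \<Longrightarrow> y \<in> Y \<Longrightarrow> adj x y"
    and X: "x \<in> X" "x0 \<in> X" and Y: "y \<in> Y" "y0 \<in> Y"
  shows "f x y = f x y0 + f y0 x0 + f x0 y"
proof -
  \<comment> \<open>Triangles \<open>x a b\<close> and \<open>x0 a b\<close> show that \<open>f x a - f x0 a\<close> is the same at both ends of an edge \<open>a b\<close> of \<open>Y\<close>.\<close>
  have "f x y - f x0 y = f x y0 - f x0 y0"
  proof (rule connected_on_const[OF conn Y])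
    fix a b assume ab: "a \<in> Y" "b \<in> Y" "adj a b"
    have "f x b = f x a + f a b" "f x0 b = f x0 a + f a b"
      using cocycle_on_triangle[OF alt cyc] X ab XY by blast+
    then show "f x a - f x0 a = f x b - f x0 b"
      by (simp add: diff_conv_add_uminus minus_add add.assoc del: add_uminus_conv_diff)
  qed
  moreover have "- f x0 y0 = f y0 x0"
    using alternating_onD[OF alt, of x0 y0] X(2) Y(2) XY by simp
  ultimately show ?thesis
    by (metis diff_add_cancel diff_conv_add_uminus)
qed

lemma coboundary_on_join:
  assumes alt: "alternating_on (X \<union> Y) f" and cyc: "cocycle_on (X \<union> Y) f"
    and x0: "x0 \<in> X" and y0: "y0 \<in> Y" and conn: "connected_on Y"
    and XY: "\<And>x y. x \<in> X \<Longrightarrow> y \<in> Y \<Longrightarrow> adj x y"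
  shows "coboundary_on (X \<union> Y) f"
proof -
  have YX: "adj y x" if "x \<in> X" "y \<in> Y" for x y
    using XY[OF that] adj_sym by blast
  have triangle: "f u v = f u w + f w v"
    if "u \<in> X \<union> Y" "v \<in> X \<union> Y" "w \<in> X \<union> Y" "adj u v" "adj u w" "adj w v" for u v w
    using cocycle_on_triangle[OF alt cyc] that by blast
  have neg: "f u v = - f v u" if "u \<in> X \<union> Y" "v \<in> X \<union> Y" "adj u v" for u v
    using alternating_onD[OF alt] that by blast
  note across = cocycle_on_join_across[OF alt cyc conn XY _ x0 _ y0]
  define g where "g z = (if z \<in> Y then f z x0 else f z y0 + f y0 x0)" for z
  have "f u v = g u - g v" if uv: "u \<in> X \<union> Y" "v \<in> X \<union> Y" "adj u v" for u v
  proof (cases "u \<in> Y"; cases "v \<in> Y")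
    assume "u \<in> Y" "v \<in> Y"
    then show ?thesis
      using triangle[of u v x0] neg[of x0 v] uv x0 XY YX by (simp add: g_def)
  next
    assume "u \<notin> Y" "v \<in> Y"
    then show ?thesis
      using across[of u v] neg[of x0 v] uv x0 XY by (simp add: g_def add.assoc)
  next
    assume "u \<in> Y" "v \<notin> Y"
    then have "f v u = g v - g u"
      using across[of v u] neg[of x0 u] uv x0 XY by (simp add: g_def add.assoc)
    then show ?thesis
      using neg[OF uv] by simp
  next
    assume "u \<notin> Y" "v \<notin> Y"
    then show ?thesis
      using triangle[of u v y0] neg[of y0 v] uv y0 XY YX
      by (simp add: g_def diff_conv_add_uminus minus_add add.assoc del: add_uminus_conv_diff)
  qed
  then show ?thesis unfolding coboundary_on_def by blast
qed

lemma cocycle_on_connected_neighbours: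
  assumes alt: "alternating_on (insert y X) f" and cyc: "cocycle_on (insert y X) f"
    and g: "\<And>u v. u \<in> X \<Longrightarrow> v \<in> X \<Longrightarrow> adj u v \<Longrightarrow> f u v = g u - g v"
    and conn: "connected_on {x \<in> X. adj x y}"
  obtains h where "\<And>u. u \<in> X \<Longrightarrow> adj u y \<Longrightarrow> f u y = g u - h"
proof (cases "\<exists>u. u \<in> X \<and> adj u y")
  case True
  then obtain u0 where u0: "u0 \<in> X" "adj u0 y"
    by blast
  show ?thesis
  proof (rule that[of "- f u0 y + g u0"])
    fix u assume u: "u \<in> X" "adj u y"
    have "- g u + f u y = - g u0 + f u0 y"
    proof (rule connected_on_const[OF conn])
      fix a b assume ab: "a \<in> {x \<in> X. adj x y}" "b \<in> {x \<in> X. adj x y}" "adj a b"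
      have "f b y = f b a + f a y"
        using cocycle_on_triangle[OF alt cyc] ab adj_sym by blast
      then show "- g a + f a y = - g b + f b y"
        using g[of b a] ab adj_sym
        by (simp add: diff_conv_add_uminus add.assoc del: add_uminus_conv_diff)
    qed (use u u0 in auto)
    then have "f u y = g u + (- g u0 + f u0 y)"
      by (metis add_minus_cancel)
    then show "f u y = g u - (- f u0 y + g u0)"
      by (simp add: diff_conv_add_uminus minus_add del: add_uminus_conv_diff)
  qed
qed (use that in blast)

lemma coboundary_on_extend_independent:
  assumes alt: "alternating_on (X \<union> Y) f" and cyc: "cocycle_on (X \<union> Y) f"
    and cob: "coboundary_on X f"
    and indep: "\<And>y y'. y \<in> Y \<Longrightarrow> y' \<in> Y \<Longrightarrow> \<not> adj y y'"
    and nbhd: "\<And>y. y \<in> Y \<Longrightarrow> connected_on {x \<in> X. adj x y}"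
  shows "coboundary_on (X \<union> Y) f"
proof -
  obtain g where g: "\<And>u v. u \<in> X \<Longrightarrow> v \<in> X \<Longrightarrow> adj u v \<Longrightarrow> f u v = g u - g v"
    using cob unfolding coboundary_on_def by blast
  have "\<exists>h. \<forall>u. u \<in> X \<and> adj u y \<longrightarrow> f u y = g u - h" if y: "y \<in> Y" for y
  proof -
    have "insert y X \<subseteq> X \<union> Y"
      using y by blast
    then show ?thesis
      using cocycle_on_connected_neighbours[OF alternating_on_subset[OF alt] cocycle_on_subset[OF cyc]
          g nbhd[OF y]] by metis
  qed
  then obtain h where to_Y: "\<And>y u. y \<in> Y \<Longrightarrow> u \<in> X \<Longrightarrow> adj u y \<Longrightarrow> f u y = g u - h y"
    by metis
  define g' where "g' z = (if z \<in> Y then h z else g z)" for z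
  have "f u v = g' u - g' v" if uv: "u \<in> X \<union> Y" "v \<in> X \<union> Y" "adj u v" for u v
  proof (cases "u \<in> Y"; cases "v \<in> Y")
    assume "u \<in> Y" "v \<in> Y"
    then show ?thesis using indep uv by blast
  next
    assume "u \<notin> Y" "v \<in> Y"
    then show ?thesis using to_Y uv by (simp add: g'_def)
  next
    assume "u \<in> Y" "v \<notin> Y"
    then have "f v u = g' v - g' u"
      using to_Y uv adj_sym by (simp add: g'_def)
    then show ?thesis
      using alternating_onD[OF alt uv] by simp
  next
    assume "u \<notin> Y" "v \<notin> Y"
    then show ?thesis using g uv by (simp add: g'_def)
  qed
  then show ?thesis unfolding coboundary_on_def by blast
qed

end

definition incident :: "'a set \<Rightarrow> 'a set \<Rightarrow> bool" where
  "incident U W \<longleftrightarrow> U \<noteq> W \<and> (U \<subseteq> W \<or> W \<subseteq> U)"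

interpretation incidence: flag_complex incident
  by unfold_locales (auto simp: incident_def)

context finite_dimensional_vector_space
begin

lemma dim_span_insert_subspace:
  "subspace U \<Longrightarrow> x \<notin> U \<Longrightarrow> dim (span (insert x U)) = Suc (dim U)"
  by (metis span_eq_iff dim_insert dim_span Suc_eq_plus1)

lemma subspace_psubset_dim_less:
  "subspace U \<Longrightarrow> subspace W \<Longrightarrow> U \<subset> W \<Longrightarrow> dim U < dim W"
  by (metis dim_psubset span_eq_iff)

lemma comparable_subspaces_eq:
  "subspace U \<Longrightarrow> subspace W \<Longrightarrow> U \<subseteq> W \<or> W \<subseteq> U \<Longrightarrow> dim U = dim W \<Longrightarrow> U = W"
  by (metis order_refl subspace_dim_equal)

lemma comparable_dim_less_imp_subset:
  "U \<subseteq> W \<or> W \<subseteq> U \<Longrightarrow> dim U < dim W \<Longrightarrow> U \<subseteq> W"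
  using dim_subset leD by blast

lemma subspace_between_exists:
  assumes "subspace A" "subspace B" "A \<subseteq> B" "dim A \<le> m" "m \<le> dim B"
  obtains X where "subspace X" "A \<subseteq> X" "X \<subseteq> B" "dim X = m"
proof -
  have "\<exists>X. subspace X \<and> A \<subseteq> X \<and> X \<subseteq> B \<and> dim X = m"
    using assms(1,3,4)
  proof (induction "m - dim A" arbitrary: A)
    case 0
    then show ?case by auto
  next
    case (Suc k)
    then have "\<not> B \<subseteq> A"
      using assms(5) dim_subset by fastforce
    then obtain x where x: "x \<in> B" "x \<notin> A" by blast
    let ?A = "span (insert x A)"
    have dim_A: "dim ?A = Suc (dim A)"
      using dim_span_insert_subspace Suc.prems(1) x(2) by blast
    have "?A \<subseteq> B"
      using x(1) Suc.prems(2) assms(2) by (simp add: span_minimal)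
    have "\<exists>X. subspace X \<and> ?A \<subseteq> X \<and> X \<subseteq> B \<and> dim X = m"
      by (rule Suc.hyps(1)) (use Suc.hyps(2) dim_A \<open>?A \<subseteq> B\<close> in auto)
    moreover have "A \<subseteq> ?A"
      using span_superset by blast
    ultimately show ?case by blast
  qed
  then show ?thesis using that by blast
qed

lemma dim_Int_hyperplane:
  assumes W: "subspace W" "W \<subseteq> B" "\<not> W \<subseteq> H"
    and H: "subspace H" "subspace B" "H \<subseteq> B" "dim B \<le> Suc (dim H)"
  shows "Suc (dim (W \<inter> H)) = dim W"
proof (rule antisym)
  have "W \<inter> H \<subset> W"
    using W(3) by blast
  then show "Suc (dim (W \<inter> H)) \<le> dim W"
    using subspace_psubset_dim_less[OF subspace_inter[OF W(1) H(1)] W(1)] by simp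
  have "{x + y |x y. x \<in> W \<and> y \<in> H} \<subseteq> B"
    using W(2) H(2,3) by (auto intro: subspace_add)
  then have "dim {x + y |x y. x \<in> W \<and> y \<in> H} \<le> dim B"
    by (rule dim_subset)
  then show "dim W \<le> Suc (dim (W \<inter> H))"
    using dim_sums_Int[OF W(1) H(1)] H(4) by linarith
qed

text \<open>Exchanging a direction of \<open>P\<close> for a vector \<open>x \<in> P' - P\<close> brings \<open>P\<close> closer to \<open>P'\<close>
while staying inside the \<open>(dim P + 1)\<close>-space \<open>span (insert x P)\<close>.\<close>

lemma subspace_exchange:
  assumes P: "subspace P" and P': "subspace P'" "dim P' = dim P" "P' \<noteq> P"
  obtains x P1 where "x \<in> P'" "subspace P1" "P \<inter> P' \<subseteq> P1" "P1 \<subseteq> span (insert x P)"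
    "dim P1 = dim P" "dim (P \<inter> P') < dim (P1 \<inter> P')"
proof -
  have "\<not> P' \<subseteq> P"
    using comparable_subspaces_eq P P' by blast
  then obtain x where x: "x \<in> P'" "x \<notin> P" by blast
  define I where "I = P \<inter> P'"
  have I: "subspace I" "I \<subset> P"
    using P P' x comparable_subspaces_eq unfolding I_def by (auto intro: subspace_inter)
  then have "dim I < dim P"
    using P subspace_psubset_dim_less by blast
  then obtain Q where Q: "subspace Q" "I \<subseteq> Q" "Q \<subseteq> P" "dim Q = dim P - 1"
    using subspace_between_exists[OF I(1) P, of "dim P - 1"] I(2) by force
  define P1 where "P1 = span (insert x Q)"
  have "x \<notin> Q" using x Q by blast
  then have "dim P1 = dim P"
    using dim_span_insert_subspace Q \<open>dim I < dim P\<close> unfolding P1_def by simp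
  moreover have "P1 \<subseteq> span (insert x P)"
    unfolding P1_def using Q(3) by (intro span_mono) blast
  moreover have "I \<subseteq> P1"
    using Q(2) span_superset unfolding P1_def by blast
  moreover have "span (insert x I) \<subseteq> P1 \<inter> P'"
  proof (rule span_minimal)
    show "insert x I \<subseteq> P1 \<inter> P'"
      using \<open>I \<subseteq> P1\<close> x(1) span_superset unfolding P1_def I_def by blast
    show "subspace (P1 \<inter> P')"
      using P'(1) unfolding P1_def by (simp add: subspace_inter)
  qed
  then have "dim (span (insert x I)) \<le> dim (P1 \<inter> P')"
    by (rule dim_subset)
  then have "dim I < dim (P1 \<inter> P')"
    using dim_span_insert_subspace[OF I(1)] x unfolding I_def by simp
  ultimately show ?thesis
    using that[of x P1] x(1) unfolding P1_def I_def by simp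
qed

lemma inj_on_dim_subspace_chain:
  assumes "\<forall>W\<in>C. subspace W" "chain\<^sub>\<subseteq> C"
  shows "inj_on dim C"
proof (rule inj_onI)
  fix U W assume "U \<in> C" "W \<in> C" "dim U = dim W"
  moreover have "U \<subseteq> W \<or> W \<subseteq> U"
    using assms(2) \<open>U \<in> C\<close> \<open>W \<in> C\<close> unfolding chain_subset_def by blast
  ultimately show "U = W"
    using comparable_subspaces_eq assms(1) by blast
qed

lemma finite_subspace_chain:
  assumes "\<forall>W\<in>C. subspace W" "chain\<^sub>\<subseteq> C"
  shows "finite C"
proof (rule finite_imageD)
  show "finite (dim ` C)"
    by (rule finite_subset[of _ "{..dimension}"]) (auto simp: dim_subset_UNIV)
  show "inj_on dim C"
    by (rule inj_on_dim_subspace_chain[OF assms])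
qed

lemma dim_span_Union_subspace_chain_le:
  assumes "\<forall>W\<in>C. subspace W" "chain\<^sub>\<subseteq> C" "\<forall>W\<in>C. dim W < a"
  shows "dim (span (\<Union>C)) \<le> a"
proof (cases "C = {}")
  case False
  have "subset.chain UNIV C"
    using assms(2) by (simp add: chain_subset_alt_def)
  then have "\<Union>C \<in> C"
    using Union_in_chain finite_subspace_chain[OF assms(1,2)] False by blast
  then show ?thesis
    using assms(3) by (simp add: less_imp_le)
qed simp

lemma dim_Inter_subspace_chain_ge:
  assumes "\<forall>W\<in>C. subspace W" "chain\<^sub>\<subseteq> C" "\<forall>W\<in>C. b < dim W" "b \<le> dimension"
  shows "b \<le> dim (\<Inter>C)"
proof (cases "C = {}")
  case True
  then show ?thesis
    using assms(4) by (simp add: dimension_def)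
next
  case False
  have "subset.chain UNIV C"
    using assms(2) by (simp add: chain_subset_alt_def)
  then have "\<Inter>C \<in> C"
    using Inter_in_chain finite_subspace_chain[OF assms(1,2)] False by blast
  then show ?thesis
    using assms(3) by (simp add: less_imp_le)
qed

end

lemma card_less_plus_card_greater:
  fixes E :: "'a::linorder set"
  assumes "finite E"
  shows "card {e \<in> E. e < a} + card {e \<in> E. a < e} = card (E - {a})"
proof -
  have "card (E - {a}) = card ({e \<in> E. e < a} \<union> {e \<in> E. a < e})"
    by (rule arg_cong[where f = card]) auto
  also have "\<dots> = card {e \<in> E. e < a} + card {e \<in> E. a < e}"
    using assms by (intro card_Un_disjoint) auto
  finally show ?thesis
    by simp
qed

text \<open>A copy of \<^locale>\<open>finite_dimensional_vector_space\<close>: definitions made in that locale itself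
would also be inherited by its interpretation \<open>eucl\<close>, whose optional prefix makes their names
ambiguous.\<close>

locale subspace_incidence = finite_dimensional_vector_space
begin

definition subspaces_between :: "'b set \<Rightarrow> 'b set \<Rightarrow> nat set \<Rightarrow> 'b set set" where
  "subspaces_between A B E = {W. subspace W \<and> A \<subseteq> W \<and> W \<subseteq> B \<and> dim W \<in> E}"

lemma subspaces_between_nonempty:
  assumes "subspace A" "subspace B" "A \<subseteq> B" "e \<in> E" "e \<in> {dim A..dim B}"
  shows "subspaces_between A B E \<noteq> {}"
proof -
  obtain W where "subspace W" "A \<subseteq> W" "W \<subseteq> B" "dim W = e"
    using subspace_between_exists[OF assms(1-3)] assms(5) by auto
  then show ?thesis
    using assms(4) unfolding subspaces_between_def by auto
qed

lemma subspaces_between_equidim_linked: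
  assumes B: "subspace B" and E: "a \<in> E" "b \<in> E" "a < b" "b \<le> dim B"
    and P: "P \<in> subspaces_between A B E" "dim P = a"
    and P': "P' \<in> subspaces_between A B E" "dim P' = a"
  shows "(incidence.edge_in (subspaces_between A B E))\<^sup>*\<^sup>* P P'"
  using P
proof (induction "a - dim (P \<inter> P')" arbitrary: P rule: less_induct)
  case less
  let ?V = "subspaces_between A B E"
  have sP: "subspace P" "A \<subseteq> P" "P \<subseteq> B" and sP': "subspace P'" "A \<subseteq> P'" "P' \<subseteq> B"
    using less.prems P' unfolding subspaces_between_def by auto
  show ?case
  proof (cases "P' = P")
    case False
    have "dim P' = dim P"
      using less.prems(2) P'(2) by simp
    then obtain x P1 where x: "x \<in> P'" and P1: "subspace P1" "P \<inter> P' \<subseteq> P1"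
      "P1 \<subseteq> span (insert x P)" "dim P1 = dim P" "dim (P \<inter> P') < dim (P1 \<inter> P')"
      by (rule subspace_exchange[OF sP(1) sP'(1) _ False])
    have "span (insert x P) \<subseteq> B"
      using x sP(3) sP'(3) B by (intro span_minimal) auto
    moreover have "dim (span (insert x P)) \<le> b"
      using E(3) less.prems(2) dim_insert[of x P] by (simp split: if_splits)
    ultimately obtain L where L: "subspace L" "span (insert x P) \<subseteq> L" "L \<subseteq> B" "dim L = b"
      using subspace_between_exists[OF subspace_span B, of "insert x P" b] E(4) by blast
    have "P \<subseteq> L" "P1 \<subseteq> L"
      using L(2) P1(3) span_superset by blast+
    then have P1_V: "P1 \<in> ?V" and L_V: "L \<in> ?V"
      using P1 L sP sP' less.prems(2) E(1,2) unfolding subspaces_between_def by auto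
    have "incidence.edge_in ?V P L" "incidence.edge_in ?V L P1"
      using \<open>P \<subseteq> L\<close> \<open>P1 \<subseteq> L\<close> L(4) P1(4) less.prems E(3) P1_V L_V
      unfolding incidence.edge_in_def incident_def by auto
    moreover have "a - dim (P1 \<inter> P') < a - dim (P \<inter> P')"
      using P1(4,5) less.prems(2) dim_subset[of "P1 \<inter> P'" P1] by auto
    then have "(incidence.edge_in ?V)\<^sup>*\<^sup>* P1 P'"
      using less.hyps P1_V P1(4) less.prems(2) by simp
    ultimately show ?thesis
      by (meson converse_rtranclp_into_rtranclp)
  qed simp
qed

lemma connected_subspaces_between:
  assumes A: "subspace A" and B: "subspace B" "A \<subseteq> B"
    and E: "2 \<le> card E" "E \<subseteq> {dim A..dim B}"
  shows "incidence.connected_on (subspaces_between A B E)"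
proof -
  let ?V = "subspaces_between A B E"
  have "finite E" "E \<noteq> {}"
    using E(1) by (auto intro: card_ge_0_finite)
  define a where "a = Min E"
  have a: "a \<in> E" "\<And>e. e \<in> E \<Longrightarrow> a \<le> e"
    unfolding a_def using \<open>finite E\<close> \<open>E \<noteq> {}\<close> by auto
  have "E \<noteq> {a}"
    using E(1) by auto
  then obtain b where b: "b \<in> E" "b \<noteq> a"
    using a(1) by blast
  show ?thesis
  proof (rule incidence.connected_on_hub[of "{P \<in> ?V. dim P = a}"])
    show "(incidence.edge_in ?V)\<^sup>*\<^sup>* P P'" if "P \<in> {P \<in> ?V. dim P = a}" "P' \<in> {P \<in> ?V. dim P = a}"
      for P P'
    proof -
      have "a < b" "b \<le> dim B"
        using a(2)[OF b(1)] b E(2) by auto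
      then show ?thesis
        using subspaces_between_equidim_linked[OF B(1) a(1) b(1)] that by blast
    qed
    show "\<exists>P\<in>{P \<in> ?V. dim P = a}. P \<in> ?V \<and> (W = P \<or> incident W P)" if W: "W \<in> ?V" for W
    proof (cases "dim W = a")
      case False
      have sW: "subspace W" "A \<subseteq> W" "W \<subseteq> B" "dim W \<in> E"
        using W unfolding subspaces_between_def by auto
      moreover have "dim A \<le> a" "a \<le> dim W"
        using a E(2) sW(4) by auto
      ultimately obtain P where "subspace P" "A \<subseteq> P" "P \<subseteq> W" "dim P = a"
        using subspace_between_exists[OF A sW(1,2)] by metis
      then have "P \<in> {P \<in> ?V. dim P = a}" "incident W P"
        using False sW a(1) unfolding subspaces_between_def incident_def by auto
      then show ?thesis
        by blast
    qed (use W in auto)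
  qed
qed

definition hyperplane_filtration :: "'b set set \<Rightarrow> 'b set \<Rightarrow> nat \<Rightarrow> 'b set set" where
  "hyperplane_filtration V H e = {U \<in> V. U \<subseteq> H \<or> e \<le> dim U}"

lemma filtration_neighbours_eq:
  assumes W: "W \<in> subspaces_between A B E"
  shows "{U \<in> hyperplane_filtration (subspaces_between A B E) H (Suc (dim W)). incident U W}
    = subspaces_between A (W \<inter> H) {e \<in> E. e < dim W} \<union> subspaces_between W B {e \<in> E. dim W < e}"
    (is "?N = ?Low \<union> ?Up")
proof (intro equalityI subsetI)
  have sW: "subspace W" "A \<subseteq> W" "W \<subseteq> B"
    using W unfolding subspaces_between_def by auto
  fix U assume "U \<in> ?N"
  then have U: "subspace U" "A \<subseteq> U" "U \<subseteq> B" "dim U \<in> E" "U \<subseteq> H \<or> dim W < dim U" "incident U W"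
    unfolding hyperplane_filtration_def subspaces_between_def by auto
  show "U \<in> ?Low \<union> ?Up"
  proof (cases "dim W < dim U")
    case True
    then have "W \<subseteq> U"
      using comparable_dim_less_imp_subset U(6) unfolding incident_def by blast
    then show ?thesis
      using U True unfolding subspaces_between_def by auto
  next
    case False
    have "dim U \<noteq> dim W"
      using comparable_subspaces_eq[OF U(1) sW(1)] U(6) unfolding incident_def by blast
    then have "dim U < dim W"
      using False by linarith
    then have "U \<subseteq> W"
      using comparable_dim_less_imp_subset U(6) unfolding incident_def by blast
    then show ?thesis
      using U False \<open>dim U < dim W\<close> unfolding subspaces_between_def by auto
  qed
next
  have sW: "subspace W" "A \<subseteq> W" "W \<subseteq> B" "dim W \<in> E"
    using W unfolding subspaces_between_def by auto
  fix U assume "U \<in> ?Low \<union> ?Up"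
  then show "U \<in> ?N"
    using sW unfolding hyperplane_filtration_def subspaces_between_def incident_def by auto
qed

lemma connected_filtration_neighbours:
  assumes A: "subspace A" and B: "subspace B"
    and H: "subspace H" "A \<subseteq> H" "H \<subseteq> B" "dim B \<le> Suc (dim H)"
    and E: "3 \<le> card E" "E \<subseteq> {dim A..dim B}"
    and W: "W \<in> subspaces_between A B E" "\<not> W \<subseteq> H"
  shows "incidence.connected_on
    {U \<in> hyperplane_filtration (subspaces_between A B E) H (Suc (dim W)). incident U W}"
proof -
  define E_lo where "E_lo = {e \<in> E. e < dim W}"
  define E_hi where "E_hi = {e \<in> E. dim W < e}"
  let ?Low = "subspaces_between A (W \<inter> H) E_lo" and ?Up = "subspaces_between W B E_hi"
  have sW: "subspace W" "A \<subseteq> W" "W \<subseteq> B" "dim W \<in> E"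
    using W(1) unfolding subspaces_between_def by auto
  have WH: "subspace (W \<inter> H)" "A \<subseteq> W \<inter> H"
    using sW H by (auto intro: subspace_inter)
  have "Suc (dim (W \<inter> H)) = dim W"
    by (rule dim_Int_hyperplane[OF sW(1,3) W(2) H(1) B H(3,4)])
  then have E_lo: "E_lo \<subseteq> {dim A..dim (W \<inter> H)}" and E_hi: "E_hi \<subseteq> {dim W..dim B}"
    using E(2) unfolding E_lo_def E_hi_def by auto
  have "finite E"
    using E(1) by (auto intro: card_ge_0_finite)
  then have card: "2 \<le> card E_lo + card E_hi"
    using card_less_plus_card_greater[of E "dim W"] E(1) sW(4) unfolding E_lo_def E_hi_def by simp
  have N: "{U \<in> hyperplane_filtration (subspaces_between A B E) H (Suc (dim W)). incident U W}
      = ?Low \<union> ?Up"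
    using filtration_neighbours_eq[OF W(1)] unfolding E_lo_def E_hi_def .
  consider "E_lo = {}" | "E_hi = {}" | "E_lo \<noteq> {}" "E_hi \<noteq> {}" by blast
  then show ?thesis
  proof cases
    case 1
    then have "?Low = {}" "2 \<le> card E_hi"
      using card unfolding subspaces_between_def by simp_all
    then show ?thesis
      unfolding N using connected_subspaces_between[OF sW(1) B sW(3) _ E_hi] by simp
  next
    case 2
    then have "?Up = {}" "2 \<le> card E_lo"
      using card unfolding subspaces_between_def by simp_all
    then show ?thesis
      unfolding N using connected_subspaces_between[OF A WH(1) WH(2) _ E_lo] by simp
  next
    case 3
    then obtain e1 e2 where "e1 \<in> E_lo" "e2 \<in> E_hi"
      by blast
    then have "?Low \<noteq> {}" "?Up \<noteq> {}"
      using subspaces_between_nonempty[OF A WH] subspaces_between_nonempty[OF sW(1) B sW(3)] E_lo E_hi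
      by blast+
    then obtain L U where "L \<in> ?Low" "U \<in> ?Up"
      by blast
    moreover have "incident L' U'" if "L' \<in> ?Low" "U' \<in> ?Up" for L' U'
      using that unfolding subspaces_between_def incident_def E_lo_def E_hi_def by auto
    ultimately show ?thesis
      unfolding N by (rule incidence.connected_on_join)
  qed
qed

lemma coboundary_on_filtration_step:
  assumes A: "subspace A" and B: "subspace B"
    and H: "subspace H" "A \<subseteq> H" "H \<subseteq> B" "dim B \<le> Suc (dim H)"
    and E: "3 \<le> card E" "E \<subseteq> {dim A..dim B}"
    and alt: "incidence.alternating_on (subspaces_between A B E) f"
    and cyc: "incidence.cocycle_on (subspaces_between A B E) f"
    and cob: "incidence.coboundary_on (hyperplane_filtration (subspaces_between A B E) H (Suc e)) f"
  shows "incidence.coboundary_on (hyperplane_filtration (subspaces_between A B E) H e) f"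
proof -
  let ?V = "subspaces_between A B E" and ?X = "hyperplane_filtration (subspaces_between A B E) H"
  define Y where "Y = {U \<in> ?V. \<not> U \<subseteq> H \<and> dim U = e}"
  have X: "?X e = ?X (Suc e) \<union> Y"
    unfolding hyperplane_filtration_def Y_def by auto
  have "?X e \<subseteq> ?V"
    unfolding hyperplane_filtration_def by auto
  show ?thesis
    unfolding X
  proof (rule incidence.coboundary_on_extend_independent[OF _ _ cob])
    show "incidence.alternating_on (?X (Suc e) \<union> Y) f"
      using incidence.alternating_on_subset[OF alt] \<open>?X e \<subseteq> ?V\<close> X by simp
    show "incidence.cocycle_on (?X (Suc e) \<union> Y) f"
      using incidence.cocycle_on_subset[OF cyc] \<open>?X e \<subseteq> ?V\<close> X by simp
    show "\<not> incident y y'" if "y \<in> Y" "y' \<in> Y" for y y'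
      using that comparable_subspaces_eq
      unfolding Y_def subspaces_between_def incident_def by auto
    show "incidence.connected_on {x \<in> ?X (Suc e). incident x y}" if y: "y \<in> Y" for y
      using connected_filtration_neighbours[OF A B H E, of y] y unfolding Y_def by simp
  qed
qed

lemma coboundary_on_subspaces_between_hyperplane:
  assumes A: "subspace A" and B: "subspace B"
    and H: "subspace H" "A \<subseteq> H" "H \<subseteq> B" "dim B \<le> Suc (dim H)"
    and E: "3 \<le> card E" "E \<subseteq> {dim A..dim B}" "dim B \<notin> E"
    and alt: "incidence.alternating_on (subspaces_between A B E) f"
    and cyc: "incidence.cocycle_on (subspaces_between A B E) f"
    and cob_H: "incidence.coboundary_on (subspaces_between A H E) f"
  shows "incidence.coboundary_on (subspaces_between A B E) f"
proof -
  let ?X = "hyperplane_filtration (subspaces_between A B E) H"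
  have "?X (dim B) = subspaces_between A H E"
    using E(3) H(3) unfolding hyperplane_filtration_def subspaces_between_def
    by (fastforce dest: dim_subset)
  then have top: "incidence.coboundary_on (?X (dim B)) f"
    using cob_H by simp
  have "incidence.coboundary_on (?X 0) f"
    using le0[of "dim B"]
  proof (induction rule: inc_induct)
    case base
    show ?case by (rule top)
  next
    case (step e)
    then show ?case
      using coboundary_on_filtration_step[OF A B H E(1,2) alt cyc] by blast
  qed
  moreover have "?X 0 = subspaces_between A B E"
    unfolding hyperplane_filtration_def by auto
  ultimately show ?thesis
    by simp
qed

theorem coboundary_on_subspaces_between:
  assumes A: "subspace A" and B: "subspace B" "A \<subseteq> B"
    and E: "3 \<le> card E" "E \<subseteq> {dim A..dim B}"
    and alt: "incidence.alternating_on (subspaces_between A B E) f"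
    and cyc: "incidence.cocycle_on (subspaces_between A B E) f"
  shows "incidence.coboundary_on (subspaces_between A B E) f"
  using B E(2) alt cyc
proof (induction "dim B" arbitrary: B rule: less_induct)
  case less
  let ?V = "subspaces_between A B E"
  show ?case
  proof (cases "dim B \<in> E")
    case True
    then have "B \<in> ?V"
      using less.prems(1,2) unfolding subspaces_between_def by auto
    moreover have "incident W B" if "W \<in> ?V" "W \<noteq> B" for W
      using that unfolding subspaces_between_def incident_def by auto
    ultimately show ?thesis
      using incidence.coboundary_on_cone[OF less.prems(4,5)] by blast
  next
    case False
    obtain e where "e \<in> E"
      using E(1) by fastforce
    then have "dim A < dim B"
      using less.prems(3) False by (auto simp: order_less_le)
    then have "dim A \<le> dim B - 1"
      by linarith
    then obtain H where H: "subspace H" "A \<subseteq> H" "H \<subseteq> B" "dim H = dim B - 1"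
      by (rule subspace_between_exists[OF A less.prems(1,2) _ diff_le_self])
    have "E \<subseteq> {dim A..dim H}"
    proof
      fix e assume "e \<in> E"
      then have "dim A \<le> e" "e \<le> dim B" "e \<noteq> dim B"
        using less.prems(3) False by auto
      then show "e \<in> {dim A..dim H}"
        using H(4) by simp
    qed
    moreover have "subspaces_between A H E \<subseteq> ?V"
      using H(3) unfolding subspaces_between_def by auto
    ultimately have "incidence.coboundary_on (subspaces_between A H E) f"
      using less.hyps[OF _ H(1,2)] H(4) \<open>dim A < dim B\<close>
        incidence.alternating_on_subset[OF less.prems(4)]
        incidence.cocycle_on_subset[OF less.prems(5)] by simp
    moreover have "dim B \<le> Suc (dim H)"
      using H(4) by simp
    ultimately show ?thesis
      using coboundary_on_subspaces_between_hyperplane[OF A less.prems(1) H(1-3) _ E(1)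
          less.prems(3) False less.prems(4,5)] by blast
  qed
qed

definition compatible_subspaces :: "'b set set \<Rightarrow> nat set \<Rightarrow> 'b set set" where
  "compatible_subspaces s E = {W. subspace W \<and> dim W \<in> E \<and> (\<forall>A\<in>s. A \<subseteq> W \<or> W \<subseteq> A)}"

lemma compatible_subspaces_mono:
  "E \<subseteq> E' \<Longrightarrow> compatible_subspaces s E \<subseteq> compatible_subspaces s E'"
  unfolding compatible_subspaces_def by auto

lemma compatible_subspaces_eq_subspaces_between:
  assumes s: "chain\<^sub>\<subseteq> s" and E: "E \<subseteq> {a..b}" and gap: "\<forall>A\<in>s. dim A < a \<or> b < dim A"
  shows "compatible_subspaces s E
    = subspaces_between (span (\<Union>{A \<in> s. dim A < a})) (\<Inter>{A \<in> s. b < dim A}) E"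
    (is "_ = subspaces_between (span (\<Union>?Lo)) (\<Inter>?Hi) E")
proof (intro equalityI subsetI)
  fix W assume "W \<in> compatible_subspaces s E"
  then have W: "subspace W" "dim W \<in> E" "\<And>A. A \<in> s \<Longrightarrow> A \<subseteq> W \<or> W \<subseteq> A"
    unfolding compatible_subspaces_def by auto
  have W_ab: "a \<le> dim W" "dim W \<le> b"
    using subsetD[OF E W(2)] by simp_all
  have "A \<subseteq> W" if "A \<in> ?Lo" for A
  proof (rule comparable_dim_less_imp_subset)
    show "A \<subseteq> W \<or> W \<subseteq> A"
      using that W(3)[of A] by simp
    show "dim A < dim W"
      using that W_ab by simp
  qed
  then have "span (\<Union>?Lo) \<subseteq> W"
    using W(1) by (intro span_minimal) auto
  moreover have "W \<subseteq> C" if "C \<in> ?Hi" for C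
  proof (rule comparable_dim_less_imp_subset)
    show "W \<subseteq> C \<or> C \<subseteq> W"
      using that W(3)[of C] by auto
    show "dim W < dim C"
      using that W_ab by simp
  qed
  then have "W \<subseteq> \<Inter>?Hi"
    by blast
  ultimately show "W \<in> subspaces_between (span (\<Union>?Lo)) (\<Inter>?Hi) E"
    using W unfolding subspaces_between_def by auto
next
  fix W assume "W \<in> subspaces_between (span (\<Union>?Lo)) (\<Inter>?Hi) E"
  then have W: "subspace W" "span (\<Union>?Lo) \<subseteq> W" "W \<subseteq> \<Inter>?Hi" "dim W \<in> E"
    unfolding subspaces_between_def by auto
  have "A \<subseteq> W \<or> W \<subseteq> A" if "A \<in> s" for A
  proof (cases "dim A < a")
    case True
    then have "A \<subseteq> \<Union>?Lo"
      using that by blast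
    then have "A \<subseteq> W"
      using span_superset[of "\<Union>?Lo"] W(2) by (meson order_trans)
    then show ?thesis ..
  next
    case False
    then have "A \<in> ?Hi"
      using that gap by auto
    then have "W \<subseteq> A"
      using W(3) by (meson Inter_lower order_trans)
    then show ?thesis ..
  qed
  then show "W \<in> compatible_subspaces s E"
    using W unfolding compatible_subspaces_def by auto
qed

lemma compatible_subspaces_interval:
  assumes s: "\<forall>A\<in>s. subspace A" "chain\<^sub>\<subseteq> s"
    and E: "E \<subseteq> {a..b}" "a \<le> b" "b \<le> dimension" and gap: "\<forall>A\<in>s. dim A < a \<or> b < dim A"
  obtains A' B' where "subspace A'" "subspace B'" "A' \<subseteq> B'" "E \<subseteq> {dim A'..dim B'}"
    "compatible_subspaces s E = subspaces_between A' B' E"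
proof
  let ?Lo = "{A \<in> s. dim A < a}" and ?Hi = "{A \<in> s. b < dim A}"
  have chains: "chain\<^sub>\<subseteq> ?Lo" "chain\<^sub>\<subseteq> ?Hi"
    using s(2) unfolding chain_subset_def by blast+
  have subspaces: "\<forall>A\<in>?Lo. subspace A" "\<forall>A\<in>?Hi. subspace A"
    using s(1) by simp_all
  show "subspace (span (\<Union>?Lo))"
    by simp
  show "subspace (\<Inter>?Hi)"
    by (rule subspace_Inter[OF subspaces(2)])
  have "dim (span (\<Union>?Lo)) \<le> a"
    by (rule dim_span_Union_subspace_chain_le[OF subspaces(1) chains(1)]) simp
  moreover have "b \<le> dim (\<Inter>?Hi)"
    by (rule dim_Inter_subspace_chain_ge[OF subspaces(2) chains(2) _ E(3)]) simp
  ultimately show "E \<subseteq> {dim (span (\<Union>?Lo))..dim (\<Inter>?Hi)}"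
    using E(1) by auto
  have Lo_Hi: "A \<subseteq> C" if "A \<in> ?Lo" "C \<in> ?Hi" for A C
  proof (rule comparable_dim_less_imp_subset)
    show "A \<subseteq> C \<or> C \<subseteq> A"
      using that s(2) unfolding chain_subset_def by blast
    show "dim A < dim C"
      using that E(2) by simp
  qed
  show "span (\<Union>?Lo) \<subseteq> \<Inter>?Hi"
    by (intro span_minimal subspace_Inter[OF subspaces(2)]) (use Lo_Hi in blast)
  show "compatible_subspaces s E = subspaces_between (span (\<Union>?Lo)) (\<Inter>?Hi) E"
    by (rule compatible_subspaces_eq_subspaces_between[OF s(2) E(1) gap])
qed

lemma compatible_subspaces_nonempty:
  assumes s: "\<forall>A\<in>s. subspace A" "chain\<^sub>\<subseteq> s"
    and E: "e \<in> E" "e \<le> dimension" "e \<notin> dim ` s"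
  shows "compatible_subspaces s E \<noteq> {}"
proof -
  have "dim A \<noteq> e" if "A \<in> s" for A
    using that E(3) by auto
  then have gap: "\<forall>A\<in>s. dim A < e \<or> e < dim A"
    by (simp add: linorder_neq_iff)
  have "{e} \<subseteq> {e..e}"
    by simp
  then obtain A' B' where A'B': "subspace A'" "subspace B'" "A' \<subseteq> B'" "{e} \<subseteq> {dim A'..dim B'}"
    "compatible_subspaces s {e} = subspaces_between A' B' {e}"
    by (rule compatible_subspaces_interval[OF s _ order_refl E(2) gap])
  have "subspaces_between A' B' {e} \<noteq> {}"
    using subspaces_between_nonempty[OF A'B'(1-3) singletonI] A'B'(4) by blast
  then show ?thesis
    using A'B'(5) compatible_subspaces_mono[of "{e}" E s] E(1) by auto
qed

lemma compatible_subspaces_split: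
  assumes "A \<in> s" "dim A \<notin> E"
  shows "compatible_subspaces s E
    = compatible_subspaces s {e \<in> E. e < dim A} \<union> compatible_subspaces s {e \<in> E. dim A < e}"
proof (intro equalityI subsetI)
  fix W assume W: "W \<in> compatible_subspaces s E"
  then have "dim W \<noteq> dim A"
    using assms(2) unfolding compatible_subspaces_def by auto
  then show "W \<in> compatible_subspaces s {e \<in> E. e < dim A} \<union> compatible_subspaces s {e \<in> E. dim A < e}"
    using W unfolding compatible_subspaces_def by (auto simp: linorder_neq_iff)
qed (auto simp: compatible_subspaces_def)

lemma compatible_subspaces_split_incident:
  assumes "A \<in> s"
    and W: "W \<in> compatible_subspaces s {e \<in> E. e < dim A}"
    and W': "W' \<in> compatible_subspaces s {e \<in> E. dim A < e}"
  shows "incident W W'"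
proof -
  have "W \<subseteq> A \<or> A \<subseteq> W" "dim W < dim A" "A \<subseteq> W' \<or> W' \<subseteq> A" "dim A < dim W'"
    using assms unfolding compatible_subspaces_def by auto
  then have "W \<subseteq> A" "A \<subseteq> W'"
    using comparable_dim_less_imp_subset by blast+
  moreover have "W \<noteq> W'"
    using W W' unfolding compatible_subspaces_def by auto
  ultimately show ?thesis
    unfolding incident_def by blast
qed

lemma compatible_subspaces_cases [consumes 6]:
  assumes s: "\<forall>A\<in>s. subspace A" "chain\<^sub>\<subseteq> s"
    and E: "finite E" "E \<noteq> {}" "E \<subseteq> {..dimension}" "E \<inter> dim ` s = {}"
  obtains (interval) A' B' where "subspace A'" "subspace B'" "A' \<subseteq> B'" "E \<subseteq> {dim A'..dim B'}"
      "compatible_subspaces s E = subspaces_between A' B' E"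
    | (split) A where "A \<in> s"
      "compatible_subspaces s E
        = compatible_subspaces s {e \<in> E. e < dim A} \<union> compatible_subspaces s {e \<in> E. dim A < e}"
      "compatible_subspaces s {e \<in> E. e < dim A} \<noteq> {}"
      "compatible_subspaces s {e \<in> E. dim A < e} \<noteq> {}"
proof (cases "\<exists>A\<in>s. Min E < dim A \<and> dim A < Max E")
  case True
  then obtain A where A: "A \<in> s" "Min E < dim A" "dim A < Max E"
    by blast
  have "Min E \<in> E" "Max E \<in> E"
    using E(1,2) by simp_all
  then have lo: "Min E \<in> {e \<in> E. e < dim A}" "Min E \<le> dimension" "Min E \<notin> dim ` s"
    and hi: "Max E \<in> {e \<in> E. dim A < e}" "Max E \<le> dimension" "Max E \<notin> dim ` s"
    using A E(3,4) by auto
  have "compatible_subspaces s {e \<in> E. e < dim A} \<noteq> {}"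
    "compatible_subspaces s {e \<in> E. dim A < e} \<noteq> {}"
    by (rule compatible_subspaces_nonempty[OF s lo], rule compatible_subspaces_nonempty[OF s hi])
  moreover have "dim A \<notin> E"
    using A(1) E(4) by blast
  ultimately show ?thesis
    using split[OF A(1) compatible_subspaces_split[OF A(1)]] by blast
next
  case False
  have MinMax: "Min E \<in> E" "Max E \<in> E" "Min E \<le> Max E"
    using E(1,2) by simp_all
  have gap: "\<forall>A\<in>s. dim A < Min E \<or> Max E < dim A"
  proof
    fix A assume "A \<in> s"
    then have "dim A \<notin> E"
      using E(4) by blast
    then have "dim A \<noteq> Min E" "dim A \<noteq> Max E"
      using MinMax by auto
    then show "dim A < Min E \<or> Max E < dim A"
      using False \<open>A \<in> s\<close> by (auto simp: linorder_neq_iff)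
  qed
  have "E \<subseteq> {Min E..Max E}" "Max E \<le> dimension"
    using E(1,3) MinMax(2) by auto
  then obtain A' B' where "subspace A'" "subspace B'" "A' \<subseteq> B'" "E \<subseteq> {dim A'..dim B'}"
      "compatible_subspaces s E = subspaces_between A' B' E"
    using compatible_subspaces_interval[OF s _ MinMax(3) _ gap] by metis
  then show ?thesis
    by (rule interval)
qed

lemma connected_compatible_subspaces:
  assumes s: "\<forall>A\<in>s. subspace A" "chain\<^sub>\<subseteq> s"
    and E: "2 \<le> card E" "E \<subseteq> {..dimension}" "E \<inter> dim ` s = {}"
  shows "incidence.connected_on (compatible_subspaces s E)"
proof -
  have "finite E" "E \<noteq> {}"
    using E(1) by (auto intro: card_ge_0_finite)
  from s this E(2,3) show ?thesis
  proof (cases rule: compatible_subspaces_cases)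
    case (interval A' B')
    then show ?thesis
      using connected_subspaces_between[OF interval(1-3) E(1) interval(4)] by simp
  next
    case (split A)
    then obtain L U where "L \<in> compatible_subspaces s {e \<in> E. e < dim A}"
      "U \<in> compatible_subspaces s {e \<in> E. dim A < e}"
      by blast
    then show ?thesis
      unfolding split(2) using compatible_subspaces_split_incident[OF split(1)]
      by (rule incidence.connected_on_join)
  qed
qed

lemma compatible_subspaces_split_connected:
  assumes s: "\<forall>A\<in>s. subspace A" "chain\<^sub>\<subseteq> s" and "A \<in> s"
    and E: "3 \<le> card E" "E \<subseteq> {..dimension}" "E \<inter> dim ` s = {}"
  shows "incidence.connected_on (compatible_subspaces s {e \<in> E. e < dim A})
    \<or> incidence.connected_on (compatible_subspaces s {e \<in> E. dim A < e})"
proof -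
  have "finite E"
    using E(1) by (auto intro: card_ge_0_finite)
  moreover have "E - {dim A} = E"
    using \<open>A \<in> s\<close> E(3) by blast
  ultimately have "card {e \<in> E. e < dim A} + card {e \<in> E. dim A < e} = card E"
    using card_less_plus_card_greater by metis
  then have "2 \<le> card {e \<in> E. e < dim A} \<or> 2 \<le> card {e \<in> E. dim A < e}"
    using E(1) by linarith
  moreover have "incidence.connected_on (compatible_subspaces s E')"
    if "2 \<le> card E'" "E' \<subseteq> E" for E'
  proof (rule connected_compatible_subspaces[OF s that(1)])
    show "E' \<subseteq> {..dimension}" "E' \<inter> dim ` s = {}"
      using that(2) E(2,3) by blast+
  qed
  ultimately show ?thesis
    by blast
qed

theorem coboundary_on_compatible_subspaces:
  assumes s: "\<forall>A\<in>s. subspace A" "chain\<^sub>\<subseteq> s"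
    and E: "3 \<le> card E" "E \<subseteq> {..dimension}" "E \<inter> dim ` s = {}"
    and alt: "incidence.alternating_on (compatible_subspaces s E) f"
    and cyc: "incidence.cocycle_on (compatible_subspaces s E) f"
  shows "incidence.coboundary_on (compatible_subspaces s E) f"
proof -
  have "finite E" "E \<noteq> {}"
    using E(1) by (auto intro: card_ge_0_finite)
  from s this E(2,3) show ?thesis
  proof (cases rule: compatible_subspaces_cases)
    case (interval A' B')
    then show ?thesis
      using coboundary_on_subspaces_between[OF interval(1-3) E(1) interval(4)] alt cyc by simp
  next
    case (split A)
    let ?Lo = "compatible_subspaces s {e \<in> E. e < dim A}"
      and ?Hi = "compatible_subspaces s {e \<in> E. dim A < e}"
    obtain L U where LU: "L \<in> ?Lo" "U \<in> ?Hi"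
      using split(3,4) by blast
    have inc: "incident L' U'" "incident U' L'" if "L' \<in> ?Lo" "U' \<in> ?Hi" for L' U'
      using compatible_subspaces_split_incident[OF split(1)] incidence.adj_sym that by blast+
    from compatible_subspaces_split_connected[OF s split(1) E] show ?thesis
    proof
      assume "incidence.connected_on ?Lo"
      then show ?thesis
        using alt cyc unfolding split(2) Un_commute[of ?Lo]
        by (intro incidence.coboundary_on_join[OF _ _ LU(2) LU(1)] inc(2))
    next
      assume "incidence.connected_on ?Hi"
      then show ?thesis
        using alt cyc unfolding split(2)
        by (intro incidence.coboundary_on_join[OF _ _ LU(1) LU(2)] inc(1))
    qed
  qed
qed

end

interpretation vec: subspace_incidence "(*s) :: 'a::field \<Rightarrow> 'a ^ 'n \<Rightarrow> 'a ^ 'n" cart_basis ..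

lemma face_subspace_chain:
  assumes "face S t"
  shows "\<forall>W\<in>t. vec.subspace W" "vec.dim ` t \<subseteq> S" "chain\<^sub>\<subseteq> t"
proof -
  obtain F where F: "top_face S F" "t \<subseteq> F"
    using assms unfolding face_def by blast
  then have "\<forall>W\<in>F. vec.subspace W" "vec.dim ` F = S" "chain\<^sub>\<subseteq> F"
    unfolding top_face_def chain_subset_def by (simp_all add: bij_betw_imp_surj_on)
  then show "\<forall>W\<in>t. vec.subspace W" "vec.dim ` t \<subseteq> S" "chain\<^sub>\<subseteq> t"
    using F(2) image_mono[OF F(2), of vec.dim] unfolding chain_subset_def by auto
qed

lemma subspace_chain_is_face:
  fixes t :: "('a::field ^ 'n) set set"
  assumes S: "S \<subseteq> {..CARD('n)}" and t: "\<forall>W\<in>t. vec.subspace W" "vec.dim ` t \<subseteq> S" "chain\<^sub>\<subseteq> t"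
  shows "face S t"
  using t unfolding face_def
proof (induction "card (S - vec.dim ` t)" arbitrary: t rule: less_induct)
  case less
  have "finite S"
    by (rule finite_subset[OF S]) simp
  show ?case
  proof (cases "S \<subseteq> vec.dim ` t")
    case True
    have "inj_on vec.dim t"
      by (rule vec.inj_on_dim_subspace_chain[OF less.prems(1,3)])
    moreover have "vec.dim ` t = S"
      by (rule subset_antisym[OF less.prems(2) True])
    ultimately have "top_face S t"
      using less.prems(1,3) unfolding top_face_def bij_betw_def chain_subset_def by simp
    then show ?thesis by blast
  next
    case False
    then obtain e where e: "e \<in> S" "e \<notin> vec.dim ` t" by blast
    have "e \<le> CARD('n)"
      using e(1) S by auto
    then have "vec.compatible_subspaces t {e} \<noteq> {}"
      using vec.compatible_subspaces_nonempty[OF less.prems(1,3) singletonI _ e(2)]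
      by (simp add: vec.dimension_def card_cart_basis)
    then obtain W where W: "vec.subspace W" "vec.dim W = e" "\<forall>A\<in>t. A \<subseteq> W \<or> W \<subseteq> A"
      unfolding vec.compatible_subspaces_def by blast
    let ?t = "insert W t"
    have "S - vec.dim ` ?t = (S - vec.dim ` t) - {e}"
      unfolding image_insert W(2) by (rule Diff_insert)
    then have "card (S - vec.dim ` ?t) < card (S - vec.dim ` t)"
      using card_Diff1_less[of "S - vec.dim ` t" e] e \<open>finite S\<close> by simp
    moreover have "\<forall>W\<in>?t. vec.subspace W" "vec.dim ` ?t \<subseteq> S"
      using W(1,2) e(1) less.prems(1,2) by simp_all
    moreover have "chain\<^sub>\<subseteq> ?t"
      using W(3) less.prems(3) unfolding chain_subset_def by blast
    ultimately have "\<exists>F. top_face S F \<and> ?t \<subseteq> F"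
      by (rule less.hyps)
    then show ?thesis by blast
  qed
qed

lemma chain_in_link:
  fixes s :: "('a::field ^ 'n) set set"
  assumes S: "S \<subseteq> {..CARD('n)}" and s: "face S s"
    and T: "T \<subseteq> vec.compatible_subspaces s (S - vec.dim ` s)" "chain\<^sub>\<subseteq> T"
  shows "T \<in> link S s"
proof -
  note s_chain = face_subspace_chain[OF s]
  have T_compatible: "vec.subspace W" "vec.dim W \<in> S" "vec.dim W \<notin> vec.dim ` s"
    "\<forall>A\<in>s. A \<subseteq> W \<or> W \<subseteq> A" if "W \<in> T" for W
    using that T(1) unfolding vec.compatible_subspaces_def by auto
  have "face S (s \<union> T)"
  proof (rule subspace_chain_is_face[OF S])
    show "\<forall>W\<in>s \<union> T. vec.subspace W"
      using s_chain(1) T_compatible(1) by blast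
    show "vec.dim ` (s \<union> T) \<subseteq> S"
      using s_chain(2) T_compatible(2) by (auto simp: image_subset_iff)
    show "chain\<^sub>\<subseteq> (s \<union> T)"
      using s_chain(3) T(2) T_compatible(4) unfolding chain_subset_def by blast
  qed
  moreover have "(s \<union> T) - s = T"
    using T_compatible(3) by (auto simp: image_iff)
  ultimately show ?thesis
    unfolding link_def by (intro CollectI exI[of _ "s \<union> T"]) simp
qed

lemma link_edgeD:
  fixes s :: "('a::field ^ 'n) set set"
  assumes "link_edge S s u v"
  shows "u \<in> vec.compatible_subspaces s (S - vec.dim ` s)"
    "v \<in> vec.compatible_subspaces s (S - vec.dim ` s)" "incident u v"
proof -
  obtain t where t: "face S t" "s \<subseteq> t" "{u, v} = t - s" and "u \<noteq> v"
    using assms unfolding link_edge_def link_def by auto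
  note t_chain = face_subspace_chain[OF t(1)]
  have "x \<in> vec.compatible_subspaces s (S - vec.dim ` s)" if x: "x \<in> t - s" for x
  proof -
    have "vec.dim x \<notin> vec.dim ` s"
    proof
      assume "vec.dim x \<in> vec.dim ` s"
      then obtain A where "A \<in> s" "vec.dim x = vec.dim A"
        by auto
      then have "x = A"
        using inj_onD[OF vec.inj_on_dim_subspace_chain[OF t_chain(1,3)]] x t(2) by blast
      then show False
        using x \<open>A \<in> s\<close> by simp
    qed
    moreover have "vec.dim x \<in> S"
      using x t_chain(2) by (auto simp: image_subset_iff)
    ultimately show ?thesis
      using x t(2) t_chain(1,3) unfolding vec.compatible_subspaces_def chain_subset_def by blast
  qed
  then show "u \<in> vec.compatible_subspaces s (S - vec.dim ` s)"
    "v \<in> vec.compatible_subspaces s (S - vec.dim ` s)"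
    using t(3) by auto
  show "incident u v"
    using \<open>u \<noteq> v\<close> t(3) t_chain(3) unfolding incident_def chain_subset_def by blast
qed

lemma card_link_dims:
  fixes s :: "('a::field ^ 'n) set set"
  assumes "finite S" "face S s"
  shows "card (S - vec.dim ` s) = card S - card s"
proof -
  note s = face_subspace_chain[OF assms(2)]
  have "card (S - vec.dim ` s) = card S - card (vec.dim ` s)"
    by (rule card_Diff_subset[OF finite_subset[OF s(2) assms(1)] s(2)])
  also have "card (vec.dim ` s) = card s"
    by (rule card_image[OF vec.inj_on_dim_subspace_chain[OF s(1,3)]])
  finally show ?thesis .
qed

lemma alternating_on_link:
  fixes s :: "('a::field ^ 'n) set set"
  assumes S: "S \<subseteq> {..CARD('n)}" and s: "face S s" and f: "cochain1 S s f"
  shows "incidence.alternating_on (vec.compatible_subspaces s (S - vec.dim ` s)) f"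
  unfolding incidence.alternating_on_def
proof (intro ballI impI)
  fix u v assume uv: "u \<in> vec.compatible_subspaces s (S - vec.dim ` s)"
    "v \<in> vec.compatible_subspaces s (S - vec.dim ` s)" "incident u v"
  have "chain\<^sub>\<subseteq> {u, v}"
    using uv(3) unfolding incident_def chain_subset_def by auto
  then have "{u, v} \<in> link S s"
    using chain_in_link[OF S s] uv(1,2) by simp
  then show "f u v = - f v u"
    using f uv(3) unfolding cochain1_def link_edge_def incident_def by blast
qed

lemma cocycle_on_link:
  fixes s :: "('a::field ^ 'n) set set"
  assumes S: "S \<subseteq> {..CARD('n)}" and s: "face S s" and f: "cocycle1 S s f"
  shows "incidence.cocycle_on (vec.compatible_subspaces s (S - vec.dim ` s)) f"
  unfolding incidence.cocycle_on_def
proof (intro ballI impI)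
  fix u v w assume uvw: "u \<in> vec.compatible_subspaces s (S - vec.dim ` s)"
    "v \<in> vec.compatible_subspaces s (S - vec.dim ` s)" "w \<in> vec.compatible_subspaces s (S - vec.dim ` s)"
    "incident u v" "incident v w" "incident u w"
  have "chain\<^sub>\<subseteq> {u, v, w}"
    using uvw(4-6) unfolding incident_def chain_subset_def by auto
  then have "{u, v, w} \<in> link S s"
    using chain_in_link[OF S s] uvw(1-3) by simp
  then show "f u v + f v w + f w u = 0"
    using f uvw(4-6) unfolding cocycle1_def link_triangle_def incident_def by blast
qed

lemma coboundary1_if_coboundary_on:
  fixes s :: "('a::field ^ 'n) set set"
  assumes "incidence.coboundary_on (vec.compatible_subspaces s (S - vec.dim ` s)) f"
  shows "coboundary1 S s f"
proof -
  obtain g where g: "\<forall>u\<in>vec.compatible_subspaces s (S - vec.dim ` s).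
      \<forall>v\<in>vec.compatible_subspaces s (S - vec.dim ` s). incident u v \<longrightarrow> f u v = g u - g v"
    using assms unfolding incidence.coboundary_on_def by blast
  show ?thesis
    unfolding coboundary1_def
  proof (intro exI allI impI)
    fix u v assume "link_edge S s u v"
    then show "f u v = g u + - g v"
      using g link_edgeD[OF \<open>link_edge S s u v\<close>] by simp
  qed
qed

theorem lemma3p3:
  fixes S :: "nat set" and s :: "('k::{finite, field} ^ 'n) set set"
    and f :: "('k ^ 'n) set \<Rightarrow> ('k ^ 'n) set \<Rightarrow> 'g::group_add"
  assumes "CARD('n) \<ge> 3"
    and "S \<subseteq> {1..CARD('n) - 1}" and "card S \<ge> 2"
    and "face S s" and "card s + 3 \<le> card S"
    and "cochain1 S s f" and "cocycle1 S s f"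
  shows "coboundary1 S s f"
proof -
  have "{1..CARD('n) - 1} \<subseteq> {..CARD('n)}"
    by auto
  then have S: "S \<subseteq> {..CARD('n)}"
    using assms(2) by (rule order_trans[rotated])
  then have "finite S"
    by (rule finite_subset) simp
  note s = face_subspace_chain[OF assms(4)]
  have "3 \<le> card (S - vec.dim ` s)"
    using card_link_dims[OF \<open>finite S\<close> assms(4)] assms(5) by linarith
  moreover have "S - vec.dim ` s \<subseteq> {..CARD('n)}" "(S - vec.dim ` s) \<inter> vec.dim ` s = {}"
    using S by blast+
  ultimately have "incidence.coboundary_on (vec.compatible_subspaces s (S - vec.dim ` s)) f"
    using vec.coboundary_on_compatible_subspaces[OF s(1,3) _ _ _
        alternating_on_link[OF S assms(4,6)] cocycle_on_link[OF S assms(4,7)]]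
    by (simp add: vec.dimension_def card_cart_basis)
  then show ?thesis
    by (rule coboundary1_if_coboundary_on)
qed

end
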